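(* Let $A$ be a Poisson algebra over a field $k$ of characteristic zero which is generated as a $k$-algebra by a Poisson subalgebra $B$ together with a single element $x$. Assume that $A$ supports a rational Poisson action of a torus $H=(k^\times)^r$ such that $B$ is $H$-stable and $x$ is an $H$-eigenvector. Assume moreover that there is $\eta_0\in\mathfrak h=\operatorname{Lie}H$ such that $\{x,b\}-(\eta_0.b)x\in B$ for all $b\in B$, and such that the $\eta_0$-eigenvalue of $x$ is nonzero. Then $A$ has at most twice as many $H$-stable Poisson prime ideals as $B$.
   Context: A rational Poisson action of $H=(k^\times)^r$ on $A$ is an action by Poisson automorphisms such that $A$ is the direct sum of its $H$-eigenspaces $A_x$, $x\in X(H)\cong\mathbb Z^r$ (with $(m_i)$ corresponding to the character $h\mapsto\prod h_i^{m_i}$). $\mathfrak h=\operatorname{Lie}H=k^r$ acts on $A$ by $\eta.a=(\eta|x)a$ for $a\in A_x$ (dot product); $(\eta|x)$ is called the $\eta$-eigenvalue of $a$. A Poisson prime ideal is a prime ideal $P$ with $\{A,P\}\subseteq P$. *)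

theory Defs
  imports Main
begin

definition k_algebra :: "('k::field \<Rightarrow> 'a::comm_ring_1 \<Rightarrow> 'a) \<Rightarrow> bool" where
  "k_algebra scale \<longleftrightarrow>
     (\<forall>c a b. scale c (a + b) = scale c a + scale c b)
   \<and> (\<forall>c d a. scale (c + d) a = scale c a + scale d a)
   \<and> (\<forall>c d a. scale c (scale d a) = scale (c * d) a)
   \<and> (\<forall>a. scale 1 a = a)
   \<and> (\<forall>c a b. scale c (a * b) = scale c a * b)"

definition poisson_algebra ::
  "('k::field \<Rightarrow> 'a::comm_ring_1 \<Rightarrow> 'a) \<Rightarrow> ('a \<Rightarrow> 'a \<Rightarrow> 'a) \<Rightarrow> bool" where
  "poisson_algebra scale br \<longleftrightarrow> k_algebra scale
     \<and> (\<forall>a b c. br (a + b) c = br a c + br b c)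
     \<and> (\<forall>a b c. br a (b + c) = br a b + br a c)
     \<and> (\<forall>s a b. br (scale s a) b = scale s (br a b))
     \<and> (\<forall>s a b. br a (scale s b) = scale s (br a b))
     \<and> (\<forall>a. br a a = 0)
     \<and> (\<forall>a b c. br a (br b c) + br b (br c a) + br c (br a b) = 0)
     \<and> (\<forall>a b c. br a (b * c) = br a b * c + b * br a c)"

definition k_subalgebra :: "('k::field \<Rightarrow> 'a::comm_ring_1 \<Rightarrow> 'a) \<Rightarrow> 'a set \<Rightarrow> bool" where
  "k_subalgebra scale S \<longleftrightarrow> 1 \<in> S \<and> 0 \<in> S
     \<and> (\<forall>a\<in>S. \<forall>b\<in>S. a + b \<in> S \<and> a * b \<in> S)
     \<and> (\<forall>a\<in>S. - a \<in> S)
     \<and> (\<forall>c. \<forall>a\<in>S. scale c a \<in> S)"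

definition poisson_subalgebra ::
  "('k::field \<Rightarrow> 'a::comm_ring_1 \<Rightarrow> 'a) \<Rightarrow> ('a \<Rightarrow> 'a \<Rightarrow> 'a) \<Rightarrow> 'a set \<Rightarrow> bool" where
  "poisson_subalgebra scale br S \<longleftrightarrow> k_subalgebra scale S
     \<and> (\<forall>a\<in>S. \<forall>b\<in>S. br a b \<in> S)"

definition generated_subalgebra ::
  "('k::field \<Rightarrow> 'a::comm_ring_1 \<Rightarrow> 'a) \<Rightarrow> 'a set \<Rightarrow> 'a set" where
  "generated_subalgebra scale G = \<Inter> {S. k_subalgebra scale S \<and> G \<subseteq> S}"

text \<open>Poisson prime ideals of a subalgebra S (S = UNIV for the whole algebra).\<close>

definition ideal_in :: "'a::comm_ring_1 set \<Rightarrow> 'a set \<Rightarrow> bool" where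
  "ideal_in S P \<longleftrightarrow> P \<subseteq> S \<and> 0 \<in> P \<and> (\<forall>a\<in>P. \<forall>b\<in>P. a + b \<in> P)
     \<and> (\<forall>s\<in>S. \<forall>p\<in>P. s * p \<in> P)"

definition prime_ideal_in :: "'a::comm_ring_1 set \<Rightarrow> 'a set \<Rightarrow> bool" where
  "prime_ideal_in S P \<longleftrightarrow> ideal_in S P \<and> P \<noteq> S
     \<and> (\<forall>a\<in>S. \<forall>b\<in>S. a * b \<in> P \<longrightarrow> a \<in> P \<or> b \<in> P)"

definition poisson_prime_in :: "('a::comm_ring_1 \<Rightarrow> 'a \<Rightarrow> 'a) \<Rightarrow> 'a set \<Rightarrow> 'a set \<Rightarrow> bool" where
  "poisson_prime_in br S P \<longleftrightarrow> prime_ideal_in S P \<and> (\<forall>s\<in>S. \<forall>p\<in>P. br s p \<in> P)"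

text \<open>The torus H = (k^x)^r, elements represented as h :: nat => 'k with h i \<noteq> 0 for i < r
  and h i = 1 for i \<ge> r.\<close>

definition torus :: "nat \<Rightarrow> (nat \<Rightarrow> 'k::field) set" where
  "torus r = {h. (\<forall>i<r. h i \<noteq> 0) \<and> (\<forall>i. r \<le> i \<longrightarrow> h i = 1)}"

definition char_lattice :: "nat \<Rightarrow> (nat \<Rightarrow> int) set" where
  "char_lattice r = {m. \<forall>i. r \<le> i \<longrightarrow> m i = 0}"

definition character :: "nat \<Rightarrow> (nat \<Rightarrow> int) \<Rightarrow> (nat \<Rightarrow> 'k::field) \<Rightarrow> 'k" where
  "character r m h = (\<Prod>i<r. h i powi m i)"

definition poisson_torus_action ::
  "('k::field \<Rightarrow> 'a::comm_ring_1 \<Rightarrow> 'a) \<Rightarrow> ('a \<Rightarrow> 'a \<Rightarrow> 'a) \<Rightarrow> nat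
     \<Rightarrow> ((nat \<Rightarrow> 'k) \<Rightarrow> 'a \<Rightarrow> 'a) \<Rightarrow> bool" where
  "poisson_torus_action scale br r act \<longleftrightarrow>
     (\<forall>a. act (\<lambda>_. 1) a = a)
   \<and> (\<forall>g\<in>torus r. \<forall>h\<in>torus r. \<forall>a. act (\<lambda>i. g i * h i) a = act g (act h a))
   \<and> (\<forall>h\<in>torus r. bij (act h)
        \<and> act h 1 = 1
        \<and> (\<forall>a b. act h (a + b) = act h a + act h b)
        \<and> (\<forall>a b. act h (a * b) = act h a * act h b)
        \<and> (\<forall>c a. act h (scale c a) = scale c (act h a))
        \<and> (\<forall>a b. act h (br a b) = br (act h a) (act h b)))"

definition eigenspace ::
  "('k::field \<Rightarrow> 'a::comm_ring_1 \<Rightarrow> 'a) \<Rightarrow> nat \<Rightarrow> ((nat \<Rightarrow> 'k) \<Rightarrow> 'a \<Rightarrow> 'a)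
     \<Rightarrow> (nat \<Rightarrow> int) \<Rightarrow> 'a set" where
  "eigenspace scale r act m = {a. \<forall>h\<in>torus r. act h a = scale (character r m h) a}"

definition weight_decomp ::
  "('k::field \<Rightarrow> 'a::comm_ring_1 \<Rightarrow> 'a) \<Rightarrow> nat \<Rightarrow> ((nat \<Rightarrow> 'k) \<Rightarrow> 'a \<Rightarrow> 'a)
     \<Rightarrow> 'a \<Rightarrow> ((nat \<Rightarrow> int) \<Rightarrow> 'a) \<Rightarrow> bool" where
  "weight_decomp scale r act a f \<longleftrightarrow>
     (\<forall>m. m \<notin> char_lattice r \<longrightarrow> f m = 0)
   \<and> finite {m. f m \<noteq> 0}
   \<and> (\<forall>m. f m \<in> eigenspace scale r act m)
   \<and> a = sum f {m. f m \<noteq> 0}"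

text \<open>Rational Poisson action: action by Poisson automorphisms such that A is the direct sum
  of its H-eigenspaces (every element has a unique eigen-decomposition).\<close>

definition rational_poisson_action ::
  "('k::field \<Rightarrow> 'a::comm_ring_1 \<Rightarrow> 'a) \<Rightarrow> ('a \<Rightarrow> 'a \<Rightarrow> 'a) \<Rightarrow> nat
     \<Rightarrow> ((nat \<Rightarrow> 'k) \<Rightarrow> 'a \<Rightarrow> 'a) \<Rightarrow> bool" where
  "rational_poisson_action scale br r act \<longleftrightarrow>
     poisson_torus_action scale br r act
   \<and> (\<forall>a. \<exists>!f. weight_decomp scale r act a f)"

text \<open>Pairing (eta | m) of h = k^r with X(H) = Z^r, and the induced action of h on A:
  eta.a = (eta|m) a for a \<in> A_m, extended linearly.\<close>

definition pairing :: "nat \<Rightarrow> (nat \<Rightarrow> 'k::field) \<Rightarrow> (nat \<Rightarrow> int) \<Rightarrow> 'k" where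
  "pairing r eta m = (\<Sum>i<r. eta i * of_int (m i))"

definition lie_act ::
  "('k::field \<Rightarrow> 'a::comm_ring_1 \<Rightarrow> 'a) \<Rightarrow> nat \<Rightarrow> ((nat \<Rightarrow> 'k) \<Rightarrow> 'a \<Rightarrow> 'a)
     \<Rightarrow> (nat \<Rightarrow> 'k) \<Rightarrow> 'a \<Rightarrow> 'a" where
  "lie_act scale r act eta a =
     (let f = (THE f. weight_decomp scale r act a f)
      in \<Sum>m\<in>{m. f m \<noteq> 0}. scale (pairing r eta m) (f m))"

definition H_stable :: "nat \<Rightarrow> ((nat \<Rightarrow> 'k::field) \<Rightarrow> 'a \<Rightarrow> 'a) \<Rightarrow> 'a set \<Rightarrow> bool" where
  "H_stable r act P \<longleftrightarrow> (\<forall>h\<in>torus r. act h ` P \<subseteq> P)"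

definition H_poisson_primes ::
  "nat \<Rightarrow> ((nat \<Rightarrow> 'k::field) \<Rightarrow> 'a::comm_ring_1 \<Rightarrow> 'a) \<Rightarrow> ('a \<Rightarrow> 'a \<Rightarrow> 'a)
     \<Rightarrow> 'a set \<Rightarrow> 'a set set" where
  "H_poisson_primes r act br S = {P. poisson_prime_in br S P \<and> H_stable r act P}"

end

theory Submission
  imports Defs "HOL-Library.Function_Algebras" "HOL-Computational_Algebra.Polynomial"
begin

text \<open>An \<open>H\<close>-stable Poisson prime \<open>P\<close> of \<open>A\<close> is sent to its contraction \<open>P \<inter> B\<close> together
  with one bit: whether \<open>P\<close> contains a homogeneous linear relation \<open>s x - t\<close> with \<open>s, t \<in> B\<close>
  and \<open>s \<notin> P\<close>.

  Without such a relation \<open>P\<close> is determined by \<open>P \<inter> B\<close>: every homogeneous element of \<open>A\<close> is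
  \<open>q(x)\<close> with \<open>q\<close> homogeneous over \<open>B\<close>, and if \<open>q(x) \<in> P\<close> then all coefficients of \<open>q\<close> lie
  in \<open>P\<close>. Otherwise take such a \<open>q\<close> of minimal degree \<open>n\<close> with leading coefficient \<open>c \<notin> P\<close> and
  subleading coefficient \<open>d\<close>; bracketing \<open>q(x)\<close> with \<open>B\<close> and with \<open>x\<close>, minimality and the
  nonzero \<open>\<eta>\<^sub>0\<close>-eigenvalue of \<open>x\<close> force \<open>n c x + d \<in> P\<close>, a linear relation.

  Two primes with linear relations and the same contraction share a linear relation \<open>s x - t\<close>
  (again by bracketing and the nonzero eigenvalue), and modulo \<open>s x - t\<close> every element becomes,
  after multiplication by a power of \<open>s\<close>, an element of \<open>B\<close>; so the primes coincide.\<close>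

lemma of_rat_power_int: "(of_rat (q powi n) :: 'k::field_char_0) = of_rat q powi n"
  by (simp add: power_int_def of_rat_power of_rat_inverse)

lemma two_power_int_inj:
  assumes "(2::'k::field_char_0) powi a = 2 powi b"
  shows "a = b"
proof -
  have "(of_rat (2 powi a) :: 'k) = of_rat (2 powi b)"
    using assms by (simp add: of_rat_power_int)
  hence eq: "(2::rat) powi a = 2 powi b" by simp
  show ?thesis
  proof (rule ccontr)
    assume "a \<noteq> b"
    then consider "a < b" | "b < a" by linarith
    thus False using eq power_int_strict_increasing[of _ _ "2::rat"]
      by (metis less_irrefl one_less_numeral_iff semiring_norm(76))
  qed
qed

lemma char_lattice_add: "m \<in> char_lattice r \<Longrightarrow> m' \<in> char_lattice r \<Longrightarrow> m + m' \<in> char_lattice r"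
  and char_lattice_diff: "m \<in> char_lattice r \<Longrightarrow> m' \<in> char_lattice r \<Longrightarrow> m - m' \<in> char_lattice r"
  and char_lattice_of_nat_mult: "m \<in> char_lattice r \<Longrightarrow> of_nat i * m \<in> char_lattice r"
  and char_lattice_zero: "0 \<in> char_lattice r"
  unfolding char_lattice_def by auto

lemma character_add:
  "h \<in> torus r \<Longrightarrow> character r (m + m') h = character r m h * character r m' h"
  unfolding character_def torus_def by (simp add: power_int_add prod.distrib)

lemma character_zero: "character r 0 h = 1"
  unfolding character_def by simp

lemma exists_separating_torus_element:
  assumes "m \<in> char_lattice r" "m' \<in> char_lattice r" "m \<noteq> m'"
  shows "\<exists>h::nat\<Rightarrow>'k::field_char_0. h \<in> torus r \<and> character r m h \<noteq> character r m' h"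
proof -
  obtain i where i: "m i \<noteq> m' i" using assms(3) by (meson ext)
  have "i < r"
    using assms(1,2) i unfolding char_lattice_def by (cases "i < r") auto
  define h :: "nat \<Rightarrow> 'k" where "h = (\<lambda>j. if j = i then 2 else 1)"
  have "h \<in> torus r" unfolding torus_def h_def using \<open>i < r\<close> by auto
  moreover have "character r n h = 2 powi n i" for n
  proof -
    have "character r n h = (\<Prod>j<r. if j = i then 2 powi n j else 1)"
      unfolding character_def h_def by (rule prod.cong) auto
    thus ?thesis using \<open>i < r\<close> by (simp add: prod.delta)
  qed
  ultimately show ?thesis using two_power_int_inj i by metis
qed

lemma pairing_add: "pairing r eta (m + m') = pairing r eta m + pairing r eta m'"
  unfolding pairing_def by (simp add: sum.distrib distrib_left)

lemma pairing_diff: "pairing r eta (m - m') = pairing r eta m - pairing r eta m'"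
  unfolding pairing_def by (simp add: sum_subtractf right_diff_distrib)

lemma pairing_of_nat_mult: "pairing r eta (of_nat i * m) = of_nat i * pairing r eta m"
  unfolding pairing_def by (simp add: sum_distrib_left algebra_simps)

definition poly_over :: "'a::zero set \<Rightarrow> 'a poly \<Rightarrow> bool" where
  "poly_over S q \<longleftrightarrow> (\<forall>i. coeff q i \<in> S)"

text \<open>The library's \<open>pderiv\<close> requires a ring without zero divisors.\<close>

definition formal_deriv :: "'a::comm_ring_1 poly \<Rightarrow> 'a poly" where
  "formal_deriv q = (\<Sum>i\<le>degree q. monom (of_nat (Suc i) * coeff q (Suc i)) i)"

lemma coeff_formal_deriv: "coeff (formal_deriv q) n = of_nat (Suc n) * coeff q (Suc n)"
proof -
  have "coeff (formal_deriv q) n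
      = (\<Sum>i\<le>degree q. if i = n then of_nat (Suc i) * coeff q (Suc i) else 0)"
    unfolding formal_deriv_def coeff_sum by (simp add: eq_commute)
  also have "\<dots> = of_nat (Suc n) * coeff q (Suc n)"
    by (subst sum.delta) (auto simp: coeff_eq_0)
  finally show ?thesis .
qed

lemma formal_deriv_pCons: "formal_deriv (pCons a p) = p + pCons 0 (formal_deriv p)"
  by (rule poly_eqI) (auto simp: coeff_formal_deriv coeff_pCons' algebra_simps)

lemma derivation_poly:
  assumes "D 0 = 0" "\<And>a b. D (a + b) = D a + D b" "\<And>a b. D (a * b) = D a * b + a * D b"
  shows "D (poly q y) = poly (map_poly D q) y + poly (formal_deriv q) y * D y"
proof (induction q)
  case (pCons a p)
  thus ?case
    using assms by (simp add: map_poly_pCons formal_deriv_pCons algebra_simps)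
qed (simp add: assms(1) formal_deriv_def)

lemma poly_map_poly_add_mult:
  assumes "f 0 = 0" "g 0 = 0"
  shows "poly (map_poly (\<lambda>a. f a + g a * y) q) y = poly (map_poly f q) y + y * poly (map_poly g q) y"
  by (induction q) (simp_all add: assms map_poly_pCons algebra_simps)

lemma coeff_mult_linear:
  "coeff (p * [:u, w:]) i = coeff p i * u + (if i = 0 then 0 else coeff p (i - 1) * w)"
  by (simp add: coeff_pCons' mult.commute)

locale poisson =
  fixes scale :: "'k::field \<Rightarrow> 'a::comm_ring_1 \<Rightarrow> 'a" and br :: "'a \<Rightarrow> 'a \<Rightarrow> 'a"
  assumes poisson_algebra: "poisson_algebra scale br"
begin

lemma scale_add_right: "scale c (a + b) = scale c a + scale c b"
  and scale_add_left: "scale (c + d) a = scale c a + scale d a"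
  and scale_scale: "scale c (scale d a) = scale (c * d) a"
  and scale_one: "scale 1 a = a"
  and scale_mult: "scale c (a * b) = scale c a * b"
  using poisson_algebra unfolding poisson_algebra_def k_algebra_def by auto

lemma br_add_left: "br (a + b) c = br a c + br b c"
  and br_add_right: "br a (b + c) = br a b + br a c"
  and br_scale_left: "br (scale s a) b = scale s (br a b)"
  and br_scale_right: "br a (scale s b) = scale s (br a b)"
  and br_self: "br a a = 0"
  and br_mult_right: "br a (b * c) = br a b * c + b * br a c"
  using poisson_algebra unfolding poisson_algebra_def by auto

lemma scale_zero_left [simp]: "scale 0 a = 0"
  using scale_add_left[of 0 0 a] by simp

lemma scale_zero_right [simp]: "scale c 0 = 0"
  using scale_add_right[of c 0 0] by simp

lemma scale_eq_mult: "scale c a = scale c 1 * a"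
  using scale_mult[of c 1 a] by simp

lemma scale_minus_left: "scale (- c) a = - scale c a"
  using scale_add_left[of c "- c" a] by (simp add: eq_neg_iff_add_eq_0 add.commute)

lemma scale_diff_left: "scale (c - d) a = scale c a - scale d a"
  using scale_add_left[of c "- d" a] scale_minus_left by simp

lemma scale_of_nat: "scale (of_nat n) a = of_nat n * a"
  by (induction n) (simp_all add: scale_add_left scale_one distrib_right)

lemma scale_inverse_cancel: "c \<noteq> 0 \<Longrightarrow> scale (inverse c) (scale c a) = a"
  by (simp add: scale_scale scale_one)

lemma scale_mult_scale: "scale c a * scale d b = scale (c * d) (a * b)"
  by (metis scale_eq_mult scale_scale mult.assoc mult.commute)

lemma scale_sum_right: "scale c (sum f S) = (\<Sum>i\<in>S. scale c (f i))"
  by (induction S rule: infinite_finite_induct) (simp_all add: scale_add_right)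

lemma br_antisym: "br a b = - br b a"
proof -
  have "0 = br (a + b) (a + b)" by (rule br_self[symmetric])
  also have "\<dots> = br a a + br a b + (br b a + br b b)" by (simp add: br_add_left br_add_right)
  finally have "br a b + br b a = 0" by (simp add: br_self)
  thus ?thesis by (simp add: eq_neg_iff_add_eq_0)
qed

lemma br_zero_left [simp]: "br 0 a = 0"
  using br_add_left[of 0 0 a] by simp

lemma br_zero_right [simp]: "br a 0 = 0"
  using br_add_right[of a 0 0] by simp

lemma br_minus_left: "br (- a) b = - br a b"
  using br_add_left[of a "- a" b] by (simp add: eq_neg_iff_add_eq_0 add.commute)

lemma br_diff_left: "br (a - b) c = br a c - br b c"
  using br_add_left[of a "- b" c] br_minus_left by simp

lemma br_mult_left: "br (a * b) c = a * br b c + br a c * b"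
proof -
  have "br (a * b) c = - (br c a * b + a * br c b)" by (metis br_antisym br_mult_right)
  thus ?thesis by (simp add: br_antisym[of c a] br_antisym[of c b] algebra_simps)
qed


lemma cross_bracket_identity:
  "s' * s' * (br b s * t - s * s * D - s * t * E - s * br b t)
     - s * s * (br b s' * t' - s' * s' * D - s' * t' * E - s' * br b t')
   = (s * s') * br (t * s' - t' * s) b - (t * s' - t' * s) * br (s * s') b
     - (s * s') * (t * s' - t' * s) * E"
  by (simp add: br_diff_left br_mult_left br_antisym[of b s] br_antisym[of b t]
      br_antisym[of b s'] br_antisym[of b t'] algebra_simps)
end

subsection \<open>Rational torus actions\<close>

locale graded_poisson = poisson scale br
  for scale :: "'k::field_char_0 \<Rightarrow> 'a::comm_ring_1 \<Rightarrow> 'a" and br +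
  fixes r :: nat and act :: "(nat \<Rightarrow> 'k) \<Rightarrow> 'a \<Rightarrow> 'a"
  assumes rational_action: "rational_poisson_action scale br r act"
begin

abbreviation "X \<equiv> char_lattice r"
abbreviation "eig m \<equiv> eigenspace scale r act m"
abbreviation "wd a f \<equiv> weight_decomp scale r act a f"

lemma act_add: "h \<in> torus r \<Longrightarrow> act h (a + b) = act h a + act h b"
  and act_mult: "h \<in> torus r \<Longrightarrow> act h (a * b) = act h a * act h b"
  and act_scale: "h \<in> torus r \<Longrightarrow> act h (scale c a) = scale c (act h a)"
  and act_br: "h \<in> torus r \<Longrightarrow> act h (br a b) = br (act h a) (act h b)"
  using rational_action unfolding rational_poisson_action_def poisson_torus_action_def by auto

lemma act_zero: "h \<in> torus r \<Longrightarrow> act h 0 = 0"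
  using act_add[of h 0 0] by simp

lemma act_sum: "h \<in> torus r \<Longrightarrow> act h (sum f S) = (\<Sum>i\<in>S. act h (f i))"
  by (induction S rule: infinite_finite_induct) (simp_all add: act_zero act_add)

lemma eig_zero: "0 \<in> eig m"
  unfolding eigenspace_def by (auto simp: act_zero)

lemma eig_add: "a \<in> eig m \<Longrightarrow> b \<in> eig m \<Longrightarrow> a + b \<in> eig m"
  unfolding eigenspace_def by (auto simp: act_add scale_add_right)

lemma eig_scale: "a \<in> eig m \<Longrightarrow> scale c a \<in> eig m"
  unfolding eigenspace_def by (auto simp: act_scale scale_scale mult.commute)

lemma eig_minus: "a \<in> eig m \<Longrightarrow> - a \<in> eig m"
  using eig_scale[of a m "- 1"] by (simp add: scale_minus_left scale_one)

lemma eig_diff: "a \<in> eig m \<Longrightarrow> b \<in> eig m \<Longrightarrow> a - b \<in> eig m"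
  using eig_add[of a m "- b"] eig_minus by simp

lemma eig_of_nat_mult: "a \<in> eig m \<Longrightarrow> of_nat n * a \<in> eig m"
  using eig_scale[of a m "of_nat n"] by (simp add: scale_of_nat)

lemma eig_mult: "a \<in> eig m \<Longrightarrow> b \<in> eig m' \<Longrightarrow> a * b \<in> eig (m + m')"
  unfolding eigenspace_def by (auto simp: act_mult character_add scale_mult_scale)

lemma eig_br: "a \<in> eig m \<Longrightarrow> b \<in> eig m' \<Longrightarrow> br a b \<in> eig (m + m')"
  unfolding eigenspace_def
  by (auto simp: act_br character_add br_scale_left br_scale_right scale_scale mult.commute)

lemma eig_one: "1 \<in> eig 0"
  using rational_action
  unfolding eigenspace_def rational_poisson_action_def poisson_torus_action_def
  by (simp add: character_zero scale_one)

lemma eig_power: "a \<in> eig m \<Longrightarrow> a ^ i \<in> eig (of_nat i * m)"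
proof (induction i)
  case (Suc i)
  hence "a * a ^ i \<in> eig (m + of_nat i * m)" using eig_mult by blast
  moreover have "of_nat (Suc i) * m = m + of_nat i * m"
    by (metis of_nat_Suc distrib_right mult_1 add.commute)
  ultimately show ?case by (metis power_Suc)
qed (simp add: eig_one)

lemma wd_props:
  assumes "wd a f"
  shows "\<And>m. m \<notin> X \<Longrightarrow> f m = 0" "finite {m. f m \<noteq> 0}" "\<And>m. f m \<in> eig m"
    "a = sum f {m. f m \<noteq> 0}"
  using assms unfolding weight_decomp_def by auto

lemma wd_sum_superset:
  assumes "wd a f" "finite U" "{m. f m \<noteq> 0} \<subseteq> U"
  shows "a = sum f U"
proof -
  have "sum f U = sum f {m. f m \<noteq> 0}"
    by (rule sum.mono_neutral_right) (use assms in auto)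
  thus ?thesis using wd_props(4)[OF assms(1)] by simp
qed

lemma wdI:
  assumes "\<And>m. m \<notin> X \<Longrightarrow> f m = 0" "finite U" "{m. f m \<noteq> 0} \<subseteq> U"
    "\<And>m. f m \<in> eig m" "a = sum f U"
  shows "wd a f"
  using assms sum.mono_neutral_right[OF assms(2,3)] finite_subset
  unfolding weight_decomp_def by auto

definition component :: "(nat \<Rightarrow> int) \<Rightarrow> 'a \<Rightarrow> 'a" where
  "component m a = (THE f. wd a f) m"

lemma wd_the: "wd a (THE f. wd a f)"
  using rational_action theI' unfolding rational_poisson_action_def by metis

lemma the_wd_eq: "wd a f \<Longrightarrow> (THE f. wd a f) = f"
  using rational_action the1_equality unfolding rational_poisson_action_def by metis

lemma component_eq: "wd a f \<Longrightarrow> component m a = f m"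
  unfolding component_def using the_wd_eq by simp

lemma component_mem_eig: "component m a \<in> eig m"
  unfolding component_def using wd_props(3)[OF wd_the] .

lemma component_nonzero_in_lattice: "component m a \<noteq> 0 \<Longrightarrow> m \<in> X"
  unfolding component_def using wd_props(1)[OF wd_the] by blast

lemma sum_components: "a = (\<Sum>m\<in>{m. component m a \<noteq> 0}. component m a)"
  and finite_components: "finite {m. component m a \<noteq> 0}"
  unfolding component_def using wd_props(4)[OF wd_the] wd_props(2)[OF wd_the] by auto

lemma wd_eigenvector:
  assumes "a \<in> eig m" "m \<in> X"
  shows "wd a (\<lambda>w. if w = m then a else 0)"
  by (rule wdI[where U = "{m}"]) (use assms eig_zero in auto)

lemma component_eigenvector:
  assumes "a \<in> eig m'" "m' \<in> X"
  shows "component m a = (if m = m' then a else 0)"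
  using component_eq[OF wd_eigenvector[OF assms]] by simp

lemma wd_add:
  assumes "wd a f" "wd b g"
  shows "wd (a + b) (\<lambda>m. f m + g m)"
proof (rule wdI[where U = "{m. f m \<noteq> 0} \<union> {m. g m \<noteq> 0}"])
  show fin: "finite ({m. f m \<noteq> 0} \<union> {m. g m \<noteq> 0})" using wd_props(2) assms by auto
  show "a + b = (\<Sum>m\<in>{m. f m \<noteq> 0} \<union> {m. g m \<noteq> 0}. f m + g m)"
    using wd_sum_superset[OF assms(1) fin] wd_sum_superset[OF assms(2) fin]
    by (simp add: sum.distrib)
qed (use wd_props[OF assms(1)] wd_props[OF assms(2)] eig_add in auto)

lemma component_add: "component m (a + b) = component m a + component m b"
  using component_eq[OF wd_add[OF wd_the wd_the]] unfolding component_def by simp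

lemma component_zero: "component m 0 = 0"
  using component_eigenvector[OF eig_zero char_lattice_zero] by simp

lemma component_sum: "component m (sum f S) = (\<Sum>i\<in>S. component m (f i))"
  by (induction S rule: infinite_finite_induct) (simp_all add: component_zero component_add)

lemma component_mult_eigenvector:
  assumes e: "e \<in> eig m'" "m' \<in> X"
  shows "component m (a * e) = component (m - m') a * e"
proof -
  let ?S = "{w. component w a \<noteq> 0}"
  have "component m (a * e) = (\<Sum>w\<in>?S. component m (component w a * e))"
    by (subst sum_components[of a]) (simp add: sum_distrib_right component_sum)
  also have "\<dots> = (\<Sum>w\<in>?S. if w = m - m' then component w a * e else 0)"
  proof (rule sum.cong)
    fix w assume "w \<in> ?S"
    hence "w + m' \<in> X" using component_nonzero_in_lattice e(2) char_lattice_add by auto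
    hence "component m (component w a * e) = (if m = w + m' then component w a * e else 0)"
      using component_eigenvector eig_mult[OF component_mem_eig e(1)] by blast
    thus "component m (component w a * e) = (if w = m - m' then component w a * e else 0)"
      by (auto simp: algebra_simps)
  qed simp
  also have "\<dots> = component (m - m') a * e"
    by (simp add: sum.delta[OF finite_components])
  finally show ?thesis .
qed

text \<open>Separating characters by torus elements splits off the components one at a time.\<close>

lemma wd_components_mem:
  assumes S0: "0 \<in> S" and S_add: "\<And>a b. a \<in> S \<Longrightarrow> b \<in> S \<Longrightarrow> a + b \<in> S"
    and S_scale: "\<And>c a. a \<in> S \<Longrightarrow> scale c a \<in> S"
    and S_act: "\<And>h a. h \<in> torus r \<Longrightarrow> a \<in> S \<Longrightarrow> act h a \<in> S"
  shows "wd a f \<Longrightarrow> a \<in> S \<Longrightarrow> f m \<in> S"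
proof (induction "card {m. f m \<noteq> 0}" arbitrary: a f rule: less_induct)
  case less
  let ?N = "{m. f m \<noteq> 0}"
  have fin: "finite ?N" and a_sum: "a = sum f ?N" using wd_props[OF less.prems(1)] by auto
  show ?case
  proof (cases "f m = 0 \<or> ?N = {m}")
    case True
    thus ?thesis using S0 a_sum less.prems(2) by auto
  next
    case False
    then obtain m' where m': "f m' \<noteq> 0" "m' \<noteq> m" by blast
    have "m \<in> X" "m' \<in> X" using wd_props(1)[OF less.prems(1)] False m' by blast+
    then obtain h :: "nat \<Rightarrow> 'k" where h: "h \<in> torus r" "character r m h \<noteq> character r m' h"
      using exists_separating_torus_element m'(2) by metis
    define g where "g = (\<lambda>w. scale (character r w h - character r m' h) (f w))"
    have "act h a = (\<Sum>w\<in>?N. scale (character r w h) (f w))"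
      unfolding a_sum act_sum[OF h(1)]
      by (rule sum.cong) (use wd_props(3)[OF less.prems(1)] h(1) in \<open>auto simp: eigenspace_def\<close>)
    hence "act h a - scale (character r m' h) a = sum g ?N"
      unfolding g_def by (subst a_sum) (simp add: scale_diff_left sum_subtractf scale_sum_right)
    hence wd_g: "wd (act h a - scale (character r m' h) a) g"
      by (intro wdI[where U = ?N] fin) (auto simp: g_def wd_props[OF less.prems(1)] eig_scale)
    have "act h a - scale (character r m' h) a \<in> S"
      using S_add[OF S_act[OF h(1) less.prems(2)] S_scale[OF less.prems(2), of "- character r m' h"]]
      by (simp add: scale_minus_left)
    moreover have "card {w. g w \<noteq> 0} < card ?N"
    proof -
      have "{w. g w \<noteq> 0} \<subseteq> ?N - {m'}" unfolding g_def by auto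
      hence "card {w. g w \<noteq> 0} \<le> card (?N - {m'})" by (intro card_mono) (use fin in auto)
      also have "\<dots> < card ?N" using card_Diff1_less[OF fin] m'(1) by simp
      finally show ?thesis .
    qed
    ultimately have "g m \<in> S" using less.hyps wd_g by blast
    hence "scale (inverse (character r m h - character r m' h)) (g m) \<in> S" by (rule S_scale)
    thus ?thesis using h(2) unfolding g_def by (simp add: scale_inverse_cancel)
  qed
qed

lemma component_mem:
  assumes "0 \<in> S" "\<And>a b. a \<in> S \<Longrightarrow> b \<in> S \<Longrightarrow> a + b \<in> S"
    "\<And>c a. a \<in> S \<Longrightarrow> scale c a \<in> S" "\<And>h a. h \<in> torus r \<Longrightarrow> a \<in> S \<Longrightarrow> act h a \<in> S"
    "a \<in> S"
  shows "component m a \<in> S"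
  unfolding component_def by (rule wd_components_mem[OF assms(1-4) wd_the assms(5)])

abbreviation "HPP \<equiv> H_poisson_primes r act br UNIV"

context
  fixes P assumes P: "P \<in> HPP"
begin

lemma HPP_unfold:
  "(0 \<in> P \<and> (\<forall>a\<in>P. \<forall>b\<in>P. a + b \<in> P) \<and> (\<forall>s. \<forall>a\<in>P. s * a \<in> P))
   \<and> P \<noteq> UNIV \<and> (\<forall>a b. a * b \<in> P \<longrightarrow> a \<in> P \<or> b \<in> P) \<and> (\<forall>s. \<forall>a\<in>P. br s a \<in> P)
   \<and> (\<forall>h\<in>torus r. act h ` P \<subseteq> P)"
  using P unfolding H_poisson_primes_def poisson_prime_in_def prime_ideal_in_def ideal_in_def
    H_stable_def by auto

lemma HPP_zero: "0 \<in> P"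
  and HPP_add: "a \<in> P \<Longrightarrow> b \<in> P \<Longrightarrow> a + b \<in> P"
  and HPP_mult: "a \<in> P \<Longrightarrow> s * a \<in> P"
  and HPP_prime: "a * b \<in> P \<Longrightarrow> a \<in> P \<or> b \<in> P"
  and HPP_neq_UNIV: "P \<noteq> UNIV"
  and HPP_br: "a \<in> P \<Longrightarrow> br s a \<in> P"
  and HPP_act: "h \<in> torus r \<Longrightarrow> a \<in> P \<Longrightarrow> act h a \<in> P"
  using HPP_unfold by blast+

lemma HPP_one: "1 \<notin> P"
proof
  assume "1 \<in> P"
  hence "a \<in> P" for a using HPP_mult[of 1 a] by simp
  thus False using HPP_neq_UNIV by auto
qed

lemma HPP_mult_right: "a \<in> P \<Longrightarrow> a * s \<in> P"
  using HPP_mult[of a s] by (simp add: mult.commute)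

lemma HPP_minus: "a \<in> P \<Longrightarrow> - a \<in> P"
  using HPP_mult[of a "- 1"] by simp

lemma HPP_diff: "a \<in> P \<Longrightarrow> b \<in> P \<Longrightarrow> a - b \<in> P"
  using HPP_add[of a "- b"] HPP_minus[of b] by simp

lemma HPP_scale: "a \<in> P \<Longrightarrow> scale c a \<in> P"
  using HPP_mult[of a "scale c 1"] scale_eq_mult[of c a] by simp

lemma HPP_sum: "(\<And>i. i \<in> S \<Longrightarrow> f i \<in> P) \<Longrightarrow> sum f S \<in> P"
  by (induction S rule: infinite_finite_induct) (auto simp: HPP_zero HPP_add)

lemma HPP_scale_cancel:
  assumes "scale c 1 * a \<in> P" "c \<noteq> 0"
  shows "a \<in> P"
proof -
  have "scale (inverse c) (scale c a) \<in> P"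
    using HPP_scale assms(1) scale_eq_mult[of c a] by simp
  thus ?thesis using scale_inverse_cancel assms(2) by simp
qed

lemma HPP_of_nat_mult_cancel: "of_nat n * a \<in> P \<Longrightarrow> n \<noteq> 0 \<Longrightarrow> a \<in> P"
  using HPP_scale_cancel[of "of_nat n" a] scale_of_nat[of n 1] by simp

lemma HPP_power_mult_cancel: "s ^ N * a \<in> P \<Longrightarrow> s \<notin> P \<Longrightarrow> a \<in> P"
proof (induction N)
  case (Suc N)
  hence "s * (s ^ N * a) \<in> P" by (simp add: mult.assoc)
  thus ?case using HPP_prime Suc by blast
qed simp

lemma HPP_poly: "poly_over P q \<Longrightarrow> poly q y \<in> P"
proof (induction q)
  case (pCons a p)
  have "a \<in> P" using pCons(3) unfolding poly_over_def by (metis coeff_pCons_0)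
  moreover have "poly_over P p"
    using pCons(3) unfolding poly_over_def by (metis coeff_pCons_Suc)
  ultimately show ?case using pCons(2) HPP_add HPP_mult by simp
qed (simp add: HPP_zero)

lemma HPP_component: "a \<in> P \<Longrightarrow> component m a \<in> P"
  by (rule component_mem) (use HPP_zero HPP_add HPP_scale HPP_act in auto)

end

lemma lie_act_eigenvector:
  assumes "a \<in> eig m" "m \<in> X"
  shows "lie_act scale r act eta a = scale (pairing r eta m) a"
proof (cases "a = 0")
  case False
  hence "{w. (if w = m then a else 0) \<noteq> 0} = {m}" by auto
  thus ?thesis unfolding lie_act_def the_wd_eq[OF wd_eigenvector[OF assms]] Let_def by simp
qed (simp add: lie_act_def the_wd_eq[OF wd_eigenvector[OF eig_zero char_lattice_zero]])

end

subsection \<open>Adjoining an eigenvector to a Poisson subalgebra\<close>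

locale adjunction = graded_poisson scale br r act
  for scale :: "'k::field_char_0 \<Rightarrow> 'a::comm_ring_1 \<Rightarrow> 'a" and br r act +
  fixes B :: "'a set" and x :: 'a and m0 :: "nat \<Rightarrow> int" and eta0 :: "nat \<Rightarrow> 'k"
  assumes poisson_subalgebra: "poisson_subalgebra scale br B"
    and generated: "generated_subalgebra scale (insert x B) = UNIV"
    and H_stable: "H_stable r act B"
    and m0: "m0 \<in> X" and x_eig: "x \<in> eig m0"
    and twisted_bracket: "\<forall>b\<in>B. br x b - lie_act scale r act eta0 b * x \<in> B"
    and eta0_m0: "pairing r eta0 m0 \<noteq> 0"
begin

abbreviation "eta b \<equiv> lie_act scale r act eta0 b"
abbreviation "wt m \<equiv> pairing r eta0 m"

lemma B_one: "1 \<in> B" and B_zero: "0 \<in> B"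
  and B_add: "a \<in> B \<Longrightarrow> b \<in> B \<Longrightarrow> a + b \<in> B"
  and B_mult: "a \<in> B \<Longrightarrow> b \<in> B \<Longrightarrow> a * b \<in> B"
  and B_minus: "a \<in> B \<Longrightarrow> - a \<in> B"
  and B_scale: "a \<in> B \<Longrightarrow> scale c a \<in> B"
  and B_br: "a \<in> B \<Longrightarrow> b \<in> B \<Longrightarrow> br a b \<in> B"
  using poisson_subalgebra unfolding poisson_subalgebra_def k_subalgebra_def by auto

lemma B_diff: "a \<in> B \<Longrightarrow> b \<in> B \<Longrightarrow> a - b \<in> B"
  using B_add[of a "- b"] B_minus by simp

lemma B_sum: "(\<And>i. i \<in> S \<Longrightarrow> f i \<in> B) \<Longrightarrow> sum f S \<in> B"
  by (induction S rule: infinite_finite_induct) (auto simp: B_zero B_add)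

lemma B_of_nat: "of_nat n \<in> B"
  by (induction n) (auto simp: B_zero B_one B_add)

lemma B_power: "a \<in> B \<Longrightarrow> a ^ n \<in> B"
  by (induction n) (auto simp: B_one B_mult)

lemma B_component: "b \<in> B \<Longrightarrow> component m b \<in> B"
proof (rule component_mem)
  show "act h a \<in> B" if "h \<in> torus r" "a \<in> B" for h a
    using H_stable that unfolding H_stable_def by blast
qed (use B_zero B_add B_scale in auto)

lemma mem_subalgebra_containing_generators:
  assumes "k_subalgebra scale S" "x \<in> S" "B \<subseteq> S"
  shows "a \<in> S"
  using assms generated unfolding generated_subalgebra_def by blast

definition homogeneous :: "(nat \<Rightarrow> int) \<Rightarrow> 'a poly \<Rightarrow> bool" where
  "homogeneous M q \<longleftrightarrow> (\<forall>i. coeff q i \<in> eig (M - of_nat i * m0))"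

lemma poly_over_B_add: "poly_over B p \<Longrightarrow> poly_over B q \<Longrightarrow> poly_over B (p + q)"
  and poly_over_B_diff: "poly_over B p \<Longrightarrow> poly_over B q \<Longrightarrow> poly_over B (p - q)"
  and poly_over_B_minus: "poly_over B p \<Longrightarrow> poly_over B (- p)"
  and poly_over_B_smult: "c \<in> B \<Longrightarrow> poly_over B p \<Longrightarrow> poly_over B (smult c p)"
  and poly_over_B_const: "c \<in> B \<Longrightarrow> poly_over B [:c:]"
  and poly_over_B_linear: "u \<in> B \<Longrightarrow> w \<in> B \<Longrightarrow> poly_over B [:u, w:]"
  unfolding poly_over_def by (simp_all add: B_add B_diff B_minus B_mult B_zero coeff_pCons')

lemma poly_over_B_mult: "poly_over B p \<Longrightarrow> poly_over B q \<Longrightarrow> poly_over B (p * q)"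
  unfolding poly_over_def coeff_mult by (auto intro!: B_sum B_mult)

lemma poly_over_B_map_poly:
  "f 0 = 0 \<Longrightarrow> (\<And>a. a \<in> B \<Longrightarrow> f a \<in> B) \<Longrightarrow> poly_over B p \<Longrightarrow> poly_over B (map_poly f p)"
  unfolding poly_over_def by (simp add: coeff_map_poly)

lemma poly_over_B_formal_deriv: "poly_over B p \<Longrightarrow> poly_over B (formal_deriv p)"
  unfolding poly_over_def coeff_formal_deriv by (blast intro: B_mult B_of_nat)

lemma poly_over_B_exists: "\<exists>q. poly_over B q \<and> poly q x = a"
proof -
  let ?T = "{poly q x | q. poly_over B q}"
  have T: "poly_over B q \<Longrightarrow> poly q x \<in> ?T" for q by blast
  have "k_subalgebra scale ?T"
    unfolding k_subalgebra_def
  proof (intro conjI ballI allI)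
    show "1 \<in> ?T" "0 \<in> ?T"
      using T[OF poly_over_B_const[OF B_one]] T[OF poly_over_B_const[OF B_zero]] by simp_all
  next
    fix a b assume "a \<in> ?T" "b \<in> ?T"
    then obtain p q where "poly_over B p" "poly_over B q" "a = poly p x" "b = poly q x" by auto
    thus "a + b \<in> ?T" "a * b \<in> ?T"
      using T[OF poly_over_B_add] T[OF poly_over_B_mult] by simp_all
  next
    fix a c assume "a \<in> ?T"
    then obtain p where p: "poly_over B p" "a = poly p x" by auto
    show "- a \<in> ?T" using p T[OF poly_over_B_minus] by simp
    have "scale c a = poly (smult (scale c 1) p) x" using p scale_eq_mult[of c a] by simp
    thus "scale c a \<in> ?T" using T[OF poly_over_B_smult[OF B_scale[OF B_one] p(1)]] by simp
  qed
  moreover have "x \<in> ?T" using T[OF poly_over_B_linear[OF B_zero B_one]] by simp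
  moreover have "B \<subseteq> ?T" using T[OF poly_over_B_const] by force
  ultimately have "a \<in> ?T" by (rule mem_subalgebra_containing_generators)
  thus ?thesis by blast
qed

lemma homogeneous_poly_over_B_exists:
  assumes a: "a \<in> eig M" "M \<in> X"
  shows "\<exists>q. poly_over B q \<and> homogeneous M q \<and> poly q x = a"
proof -
  obtain q0 where q0: "poly_over B q0" "poly q0 x = a" using poly_over_B_exists by blast
  define q where "q = (\<Sum>i\<le>degree q0. monom (component (M - of_nat i * m0) (coeff q0 i)) i)"
  have coeff_q: "coeff q i = (if i \<le> degree q0 then component (M - of_nat i * m0) (coeff q0 i) else 0)"
    for i unfolding q_def coeff_sum coeff_monom by (simp add: sum.delta)
  have "poly_over B q"
    using q0(1) B_component B_zero unfolding poly_over_def coeff_q by auto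
  moreover have "homogeneous M q"
    unfolding homogeneous_def coeff_q using component_mem_eig eig_zero by auto
  moreover have "poly q x = a"
  proof -
    have "a = component M (\<Sum>i\<le>degree q0. coeff q0 i * x ^ i)"
      using component_eigenvector[OF a] q0(2) poly_altdef by metis
    also have "\<dots> = (\<Sum>i\<le>degree q0. component (M - of_nat i * m0) (coeff q0 i) * x ^ i)"
      unfolding component_sum
      by (intro sum.cong refl component_mult_eigenvector eig_power x_eig char_lattice_of_nat_mult m0)
    also have "\<dots> = poly q x" unfolding q_def poly_sum poly_monom ..
    finally show ?thesis by simp
  qed
  ultimately show ?thesis by blast
qed

lemma homogeneous_diff: "homogeneous M p \<Longrightarrow> homogeneous M q \<Longrightarrow> homogeneous M (p - q)"
  unfolding homogeneous_def by (simp add: eig_diff)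

lemma homogeneous_smult: "c \<in> eig m \<Longrightarrow> homogeneous M p \<Longrightarrow> homogeneous (m + M) (smult c p)"
  unfolding homogeneous_def using eig_mult by (fastforce simp: add_diff_eq)

lemma homogeneous_map_br:
  "b \<in> eig m \<Longrightarrow> homogeneous M p \<Longrightarrow> homogeneous (m + M) (map_poly (br b) p)"
  unfolding homogeneous_def using eig_br by (fastforce simp: add_diff_eq coeff_map_poly)

lemma homogeneous_formal_deriv: "homogeneous M p \<Longrightarrow> homogeneous (M - m0) (formal_deriv p)"
  unfolding homogeneous_def coeff_formal_deriv
proof
  fix i assume "\<forall>i. coeff p i \<in> eig (M - of_nat i * m0)"
  hence "of_nat (Suc i) * coeff p (Suc i) \<in> eig (M - of_nat (Suc i) * m0)"
    using eig_of_nat_mult by blast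
  moreover have "M - of_nat (Suc i) * m0 = M - m0 - of_nat i * m0" by (simp add: algebra_simps)
  ultimately show "of_nat (Suc i) * coeff p (Suc i) \<in> eig (M - m0 - of_nat i * m0)" by metis
qed

lemma homogeneous_mult_linear:
  assumes p: "homogeneous M p" and "u \<in> eig (m + m0)" "w \<in> eig m"
  shows "homogeneous (M + m + m0) (p * [:u, w:])"
  unfolding homogeneous_def coeff_mult_linear
proof
  fix i
  have "coeff p i * u \<in> eig (M - of_nat i * m0 + (m + m0))"
    using p assms eig_mult unfolding homogeneous_def by blast
  hence first: "coeff p i * u \<in> eig (M + m + m0 - of_nat i * m0)" by (simp add: algebra_simps)
  have second: "(if i = 0 then 0 else coeff p (i - 1) * w) \<in> eig (M + m + m0 - of_nat i * m0)"
  proof (cases i)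
    case (Suc j)
    have "coeff p j * w \<in> eig (M - of_nat j * m0 + m)"
      using p assms eig_mult unfolding homogeneous_def by blast
    moreover have "M - of_nat j * m0 + m = M + m + m0 - of_nat i * m0"
      using Suc by (simp add: algebra_simps)
    ultimately show ?thesis using Suc by simp
  qed (simp add: eig_zero)
  show "coeff p i * u + (if i = 0 then 0 else coeff p (i - 1) * w)
      \<in> eig (M + m + m0 - of_nat i * m0)"
    using eig_add[OF first second] .
qed

definition delta :: "'a \<Rightarrow> 'a" where
  "delta b = br x b - eta b * x"

lemma eta_eigenvector: "b \<in> eig m \<Longrightarrow> m \<in> X \<Longrightarrow> eta b = scale (wt m) b"
  by (rule lie_act_eigenvector)

lemma eta_zero: "eta 0 = 0"
  using eta_eigenvector[OF eig_zero char_lattice_zero] by simp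

lemma eta_mem_B: "b \<in> eig m \<Longrightarrow> m \<in> X \<Longrightarrow> b \<in> B \<Longrightarrow> eta b \<in> B"
  using eta_eigenvector B_scale by metis

lemma eta_mem_eig: "b \<in> eig m \<Longrightarrow> m \<in> X \<Longrightarrow> eta b \<in> eig m"
  using eta_eigenvector eig_scale by metis

lemma delta_mem_B: "b \<in> B \<Longrightarrow> delta b \<in> B"
  using twisted_bracket unfolding delta_def by auto

lemma delta_zero: "delta 0 = 0"
  by (simp add: delta_def eta_zero)

lemma br_x: "br x b = delta b + eta b * x"
  by (simp add: delta_def)

lemma delta_mem_eig: "b \<in> eig m \<Longrightarrow> m \<in> X \<Longrightarrow> delta b \<in> eig (m + m0)"
  unfolding delta_def using eig_br[OF x_eig] eig_mult[OF eta_mem_eig x_eig]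
  by (metis eig_diff add.commute)

lemma br_poly:
  "br b (poly q x) = poly (map_poly (br b) q) x - poly (formal_deriv q) x * (delta b + eta b * x)"
proof -
  have "br b (poly q x) = poly (map_poly (br b) q) x + poly (formal_deriv q) x * br b x"
    by (rule derivation_poly) (simp_all add: br_add_right br_mult_right)
  thus ?thesis using br_antisym[of b x] br_x[of b] by (simp add: algebra_simps)
qed

lemma br_x_poly: "br x (poly q x) = poly (map_poly delta q) x + x * poly (map_poly eta q) x"
proof -
  have "br x (poly q x) = poly (map_poly (br x) q) x + poly (formal_deriv q) x * br x x"
    by (rule derivation_poly) (simp_all add: br_add_right br_mult_right)
  also have "map_poly (br x) q = map_poly (\<lambda>a. delta a + eta a * x) q"
    using br_x by presburger
  finally show ?thesis
    using poly_map_poly_add_mult[where f = delta and g = eta, OF delta_zero eta_zero]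
    by (simp add: br_self)
qed

text \<open>Euler's identity for the grading: \<open>\<eta>\<^sub>0\<close> acts on a homogeneous element of weight \<open>M\<close>
  by \<open>wt M\<close>, and on \<open>x\<^sup>i\<close> by \<open>i \<cdot> wt m0\<close>.\<close>

lemma eta_poly:
  assumes q: "homogeneous M q" and M: "M \<in> X"
  shows "poly (map_poly eta q) x
    = scale (wt M) 1 * poly q x - scale (wt m0) 1 * (x * poly (formal_deriv q) x)"
proof -
  have "map_poly eta q
      = smult (scale (wt M) 1) q - smult (scale (wt m0) 1) (pCons 0 (formal_deriv q))"
  proof (rule poly_eqI)
    fix i
    have "coeff q i \<in> eig (M - of_nat i * m0)" using q unfolding homogeneous_def by blast
    moreover have "M - of_nat i * m0 \<in> X" using char_lattice_diff char_lattice_of_nat_mult M m0 by blast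
    ultimately have "eta (coeff q i) = scale (wt M - of_nat i * wt m0) (coeff q i)"
      using eta_eigenvector by (simp add: pairing_diff pairing_of_nat_mult)
    also have "\<dots> = scale (wt M) 1 * coeff q i - of_nat i * (scale (wt m0) 1 * coeff q i)"
      by (simp add: scale_diff_left scale_of_nat flip: scale_scale)
        (metis scale_eq_mult scale_of_nat mult.assoc)
    finally show "coeff (map_poly eta q) i
        = coeff (smult (scale (wt M) 1) q - smult (scale (wt m0) 1) (pCons 0 (formal_deriv q))) i"
      by (cases i) (simp_all add: coeff_map_poly eta_zero coeff_formal_deriv algebra_simps)
  qed
  thus ?thesis by simp
qed

subsubsection \<open>Relations modulo a prime\<close>

definition relation :: "'a set \<Rightarrow> (nat \<Rightarrow> int) \<Rightarrow> 'a poly \<Rightarrow> bool" where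
  "relation P M q \<longleftrightarrow> poly_over B q \<and> homogeneous M q \<and> M \<in> X \<and> poly q x \<in> P"

definition has_linear_relation :: "'a set \<Rightarrow> bool" where
  "has_linear_relation P \<longleftrightarrow> (\<exists>s t m. s \<in> B \<and> t \<in> B \<and> m \<in> X \<and> s \<in> eig m \<and> t \<in> eig (m + m0)
     \<and> s \<notin> P \<and> s * x - t \<in> P)"

lemma relation_coeffs_mem:
  assumes P: "P \<in> HPP"
    and lower: "\<And>q M. relation P M q \<Longrightarrow> degree q < n \<Longrightarrow> lead_coeff q \<in> P"
  shows "relation P M q \<Longrightarrow> degree q < n \<Longrightarrow> coeff q i \<in> P"
proof (induction "degree q" arbitrary: q i rule: less_induct)
  case less
  have lead: "lead_coeff q \<in> P" using lower less.prems by blast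
  consider "i = degree q" | "degree q < i" | "i < degree q" by linarith
  thus ?case
  proof cases
    case 3
    define q' where "q' = q - monom (lead_coeff q) (degree q)"
    have coeff_q': "coeff q' j = (if j = degree q then 0 else coeff q j)" for j
      unfolding q'_def by simp
    have "degree q' \<le> degree q - 1" by (rule degree_le) (auto simp: coeff_q' coeff_eq_0)
    hence "degree q' < degree q" using 3 by linarith
    moreover have "relation P M q'"
    proof -
      have "poly q' x = poly q x - lead_coeff q * x ^ degree q" by (simp add: q'_def poly_monom)
      hence "poly q' x \<in> P"
        using HPP_diff[OF P _ HPP_mult_right[OF P lead]] less.prems(1) unfolding relation_def
        by simp
      thus ?thesis using less.prems(1) B_zero eig_zero
        unfolding relation_def poly_over_def homogeneous_def coeff_q' by simp
    qed
    ultimately have "coeff q' i \<in> P" using less.hyps less.prems(2) by fastforce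
    thus ?thesis using 3 coeff_q' by simp
  qed (use lead HPP_zero[OF P] coeff_eq_0[of q i] in auto)
qed

lemma linear_relation_bracket_mem:
  assumes P: "P \<in> HPP" and st: "s * x - t \<in> P"
  shows "br b s * t - s * s * delta b - s * t * eta b - s * br b t \<in> P"
proof -
  have "s * br b (s * x - t) = (s * x - t) * (br b s - s * eta b)
      + (br b s * t - s * s * delta b - s * t * eta b - s * br b t)"
    by (simp add: br_diff_left br_antisym[of b "s * x - t"] br_mult_left br_x br_antisym[of b s]
        br_antisym[of b t] algebra_simps)
  moreover have "s * br b (s * x - t) \<in> P" using HPP_br[OF P st] HPP_mult[OF P] by blast
  moreover have "(s * x - t) * (br b s - s * eta b) \<in> P" using HPP_mult_right[OF P st] .
  ultimately show ?thesis using HPP_diff[OF P] by (metis add_diff_cancel_left')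
qed

lemma linear_relations_cross_bracket_mem:
  assumes P: "P \<in> HPP" and Q: "Q \<in> HPP" and PQ: "P \<inter> B = Q \<inter> B"
    and st: "s * x - t \<in> P" and st': "s' \<in> B" "t' \<in> B" "s' * x - t' \<in> Q"
    and b: "b \<in> B" "b \<in> eig mb" "mb \<in> X"
  shows "s * s' * br (t * s' - t' * s) b - (t * s' - t' * s) * br (s * s') b
    - s * s' * (t * s' - t' * s) * eta b \<in> P"
proof -
  let ?G = "\<lambda>s t. br b s * t - s * s * delta b - s * t * eta b - s * br b t"
  have "?G s' t' \<in> B"
    by (intro B_diff B_mult B_br delta_mem_B eta_mem_B[OF b(2,3)] b(1) st')
  hence "?G s' t' \<in> P" using linear_relation_bracket_mem[OF Q st'(3)] PQ by blast
  hence "s' * s' * ?G s t - s * s * ?G s' t' \<in> P"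
    using linear_relation_bracket_mem[OF P st] HPP_mult[OF P] HPP_diff[OF P] by blast
  thus ?thesis unfolding cross_bracket_identity .
qed

text \<open>Evaluating the cross bracket relation at \<open>b = s s'\<close> and at \<open>b = t s' - t' s\<close> leaves
  \<open>wt m0 \<cdot> s s' (t s' - t' s)\<^sup>2 \<in> P\<close>.\<close>

lemma linear_relations_cross_mem:
  assumes P: "P \<in> HPP" and Q: "Q \<in> HPP" and PQ: "P \<inter> B = Q \<inter> B"
    and st: "s \<in> B" "t \<in> B" "m \<in> X" "s \<in> eig m" "t \<in> eig (m + m0)" "s \<notin> P" "s * x - t \<in> P"
    and st': "s' \<in> B" "t' \<in> B" "m' \<in> X" "s' \<in> eig m'" "t' \<in> eig (m' + m0)" "s' \<notin> Q"
      "s' * x - t' \<in> Q"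
  shows "t * s' - t' * s \<in> P"
proof -
  define q where "q = s * s'"
  define v where "v = t * s' - t' * s"
  have q_B: "q \<in> B" and v_B: "v \<in> B" unfolding q_def v_def using st st' B_mult B_diff by auto
  have q_eig: "q \<in> eig (m + m')" unfolding q_def using eig_mult st st' by blast
  have v_eig: "v \<in> eig (m + m' + m0)"
  proof -
    have "t * s' \<in> eig (m + m' + m0)" "t' * s \<in> eig (m + m' + m0)"
      using eig_mult[OF st(5) st'(4)] eig_mult[OF st'(5) st(4)] by (simp_all add: algebra_simps)
    thus ?thesis unfolding v_def by (rule eig_diff)
  qed
  have q_X: "m + m' \<in> X" and v_X: "m + m' + m0 \<in> X" using char_lattice_add st st' m0 by auto
  have q_P: "q \<notin> P" using HPP_prime[OF P, of s s'] st(6) st'(1,6) PQ unfolding q_def by blast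
  have cross: "q * br v b - v * br q b - q * v * eta b \<in> P"
    if "b \<in> B" "b \<in> eig mb" "mb \<in> X" for b mb
    using linear_relations_cross_bracket_mem[OF P Q PQ st(7) st'(1,2,7) that]
    unfolding q_def v_def .
  have "q * (br v q - scale (wt (m + m')) 1 * v * q) \<in> P"
    using cross[OF q_B q_eig q_X] eta_eigenvector[OF q_eig q_X] scale_eq_mult[of "wt (m + m')" q]
    by (simp add: br_self algebra_simps)
  hence vq: "br v q - scale (wt (m + m')) 1 * v * q \<in> P" using HPP_prime[OF P] q_P by blast
  have "eta v = scale (wt (m + m')) v + scale (wt m0) v"
    by (simp add: eta_eigenvector[OF v_eig v_X] pairing_add scale_add_left)
  also have "\<dots> = scale (wt (m + m')) 1 * v + scale (wt m0) 1 * v"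
    by (subst scale_eq_mult, subst (2) scale_eq_mult, rule refl)
  finally have "v * (br v q - scale (wt (m + m')) 1 * v * q) - scale (wt m0) 1 * (q * v * v) \<in> P"
    using cross[OF v_B v_eig v_X] br_antisym[of q v] by (simp add: br_self algebra_simps)
  from HPP_diff[OF P HPP_mult[OF P vq, of v] this] have "scale (wt m0) 1 * (q * v * v) \<in> P" by simp
  hence "q * v * v \<in> P" using HPP_scale_cancel[OF P _ eta0_m0] by blast
  hence "q * (v * v) \<in> P" by (simp add: mult.assoc)
  thus ?thesis using HPP_prime[OF P] q_P unfolding v_def by blast
qed

lemma power_mult_mod_linear:
  assumes s: "s \<in> B" and t: "t \<in> B"
  shows "\<exists>N b e. b \<in> B \<and> s ^ N * a = b + (s * x - t) * e"
proof -
  let ?g = "s * x - t"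
  let ?U = "{a. \<exists>N b e. b \<in> B \<and> s ^ N * a = b + ?g * e}"
  have U: "b \<in> B \<Longrightarrow> s ^ N * a = b + ?g * e \<Longrightarrow> a \<in> ?U" for a b e N by blast
  have "k_subalgebra scale ?U"
    unfolding k_subalgebra_def
  proof (intro conjI ballI allI)
    show "1 \<in> ?U" "0 \<in> ?U" using U[OF B_one, of 0 1 0] U[OF B_zero, of 0 0 0] by simp_all
  next
    fix a a' assume "a \<in> ?U" "a' \<in> ?U"
    then obtain N b e N' b' e' where h: "b \<in> B" "s ^ N * a = b + ?g * e"
      "b' \<in> B" "s ^ N' * a' = b' + ?g * e'" by blast
    have "s ^ (N + N') * (a + a') = s ^ N' * (s ^ N * a) + s ^ N * (s ^ N' * a')"
      "s ^ (N + N') * (a * a') = (s ^ N * a) * (s ^ N' * a')"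
      by (simp_all add: power_add algebra_simps)
    hence "s ^ (N + N') * (a + a') = (s ^ N' * b + s ^ N * b') + ?g * (s ^ N' * e + s ^ N * e')"
      "s ^ (N + N') * (a * a') = b * b' + ?g * (e * b' + b * e' + ?g * e * e')"
      unfolding h(2,4) by (simp_all add: algebra_simps)
    moreover have "s ^ N' * b + s ^ N * b' \<in> B" "b * b' \<in> B"
      by (intro B_add B_mult B_power h(1,3) s)+
    ultimately show "a + a' \<in> ?U" "a * a' \<in> ?U" by (blast intro: U)+
  next
    fix a c assume "a \<in> ?U"
    then obtain N b e where h: "b \<in> B" "s ^ N * a = b + ?g * e" by blast
    have "s ^ N * (- a) = - b + ?g * (- e)" using h(2) by (simp add: algebra_simps)
    thus "- a \<in> ?U" using U B_minus h(1) by blast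
    have "s ^ N * scale c a = scale c 1 * (s ^ N * a)"
      using scale_eq_mult[of c a] by (simp add: algebra_simps)
    also have "\<dots> = scale c 1 * b + ?g * (scale c 1 * e)"
      unfolding h(2) by (simp add: algebra_simps)
    finally have "s ^ N * scale c a = scale c 1 * b + ?g * (scale c 1 * e)" .
    thus "scale c a \<in> ?U" using U B_mult B_scale B_one h(1) by blast
  qed
  moreover have "x \<in> ?U" using U[OF t, of 1 x 1] by simp
  moreover have "B \<subseteq> ?U" using U[of _ 0 _ 0] by force
  ultimately have "a \<in> ?U" by (rule mem_subalgebra_containing_generators)
  thus ?thesis by blast
qed

lemma subset_if_common_linear_relation:
  assumes P: "P \<in> HPP" and Q: "Q \<in> HPP" and PQ: "P \<inter> B \<subseteq> Q"
    and st: "s \<in> B" "t \<in> B" "s \<notin> Q" "s * x - t \<in> P" "s * x - t \<in> Q"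
  shows "P \<subseteq> Q"
proof
  fix a assume "a \<in> P"
  obtain N b e where b: "b \<in> B" "s ^ N * a = b + (s * x - t) * e"
    using power_mult_mod_linear[OF st(1,2)] by blast
  have "b = s ^ N * a - (s * x - t) * e" using b(2) by simp
  hence "b \<in> P" using HPP_diff[OF P HPP_mult[OF P \<open>a \<in> P\<close>] HPP_mult_right[OF P st(4)]] by simp
  hence "s ^ N * a \<in> Q" using b PQ HPP_add[OF Q _ HPP_mult_right[OF Q st(5)]] by auto
  thus "a \<in> Q" using HPP_power_mult_cancel[OF Q] st(3) by blast
qed

lemma subset_if_linear_relations:
  assumes P: "P \<in> HPP" and Q: "Q \<in> HPP" and PQ: "P \<inter> B = Q \<inter> B"
    and "has_linear_relation P" "has_linear_relation Q"
  shows "P \<subseteq> Q"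
proof -
  obtain s t m where st: "s \<in> B" "t \<in> B" "m \<in> X" "s \<in> eig m" "t \<in> eig (m + m0)"
      "s \<notin> P" "s * x - t \<in> P"
    using assms(4) unfolding has_linear_relation_def by blast
  obtain s' t' m' where st': "s' \<in> B" "t' \<in> B" "m' \<in> X" "s' \<in> eig m'" "t' \<in> eig (m' + m0)"
      "s' \<notin> Q" "s' * x - t' \<in> Q"
    using assms(5) unfolding has_linear_relation_def by blast
  have "t * s' - t' * s \<in> B" by (intro B_diff B_mult st st')
  hence "t * s' - t' * s \<in> Q" using linear_relations_cross_mem[OF P Q PQ st st'] PQ by blast
  from HPP_diff[OF Q HPP_mult[OF Q st'(7), of s] this]
  have "s' * (s * x - t) \<in> Q" by (simp add: algebra_simps)
  hence "s * x - t \<in> Q" using HPP_prime[OF Q] st'(6) by blast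
  moreover have "s \<notin> Q" using st(1,6) PQ by blast
  ultimately show ?thesis
    using subset_if_common_linear_relation[OF P Q _ st(1,2)] st(7) PQ by blast
qed

end

text \<open>For a relation \<open>q\<close> of minimal degree \<open>n\<close> with leading coefficient \<open>lc \<notin> P\<close>, the
  polynomial \<open>bracket_poly b\<close> is a relation of lower degree, so its subleading coefficient,
  \<open>- defect b\<close>, lies in \<open>P\<close>.\<close>

locale minimal_relation = adjunction scale br r act B x m0 eta0
  for scale :: "'k::field_char_0 \<Rightarrow> 'a::comm_ring_1 \<Rightarrow> 'a" and br r act B x m0 eta0 +
  fixes P :: "'a set" and q :: "'a poly" and M :: "nat \<Rightarrow> int"
  assumes P: "P \<in> HPP" and relation: "relation P M q" and lead_coeff_notin: "lead_coeff q \<notin> P"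
    and minimal: "\<And>q' M'. relation P M' q' \<Longrightarrow> degree q' < degree q \<Longrightarrow> lead_coeff q' \<in> P"
begin

abbreviation "n \<equiv> degree q"
abbreviation "lc \<equiv> lead_coeff q"
abbreviation "slc \<equiv> coeff q (n - 1)"
abbreviation "lwt \<equiv> M - of_nat n * m0"

lemma q_B: "poly_over B q" and q_homogeneous: "homogeneous M q" and M_X: "M \<in> X"
  and q_P: "poly q x \<in> P"
  using relation unfolding relation_def by auto

lemma lower_relation_coeff: "relation P M' q' \<Longrightarrow> degree q' < n \<Longrightarrow> coeff q' i \<in> P"
  by (rule relation_coeffs_mem[OF P minimal])

lemma degree_pos: "0 < n"
proof (rule ccontr)
  assume "\<not> 0 < n"
  hence "poly q x = poly [:coeff q 0:] x" using degree_0_id by (metis gr0I)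
  hence "poly q x = lc" using \<open>\<not> 0 < n\<close> by simp
  thus False using q_P lead_coeff_notin by simp
qed

lemma lc_B: "lc \<in> B" and slc_B: "slc \<in> B"
  using q_B unfolding poly_over_def by auto

lemma lwt_X: "lwt \<in> X" and lwt_m0_X: "lwt + m0 \<in> X"
  using char_lattice_diff char_lattice_add char_lattice_of_nat_mult M_X m0 by blast+

lemma lc_eig: "lc \<in> eig lwt"
  using q_homogeneous unfolding homogeneous_def by blast

lemma slc_eig: "slc \<in> eig (lwt + m0)"
proof -
  have "slc \<in> eig (M - of_nat (n - 1) * m0)" using q_homogeneous unfolding homogeneous_def by blast
  moreover have "M - of_nat (n - 1) * m0 = lwt + m0"
    using degree_pos by (simp add: of_nat_diff algebra_simps)
  ultimately show ?thesis by metis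
qed

lemma coeff_formal_deriv_top: "coeff (formal_deriv q) (n - 1) = of_nat n * lc"
  and coeff_formal_deriv_above: "n \<le> i \<Longrightarrow> coeff (formal_deriv q) i = 0"
  using degree_pos by (simp_all add: coeff_formal_deriv coeff_eq_0)

lemma degree_formal_deriv_less: "degree (formal_deriv q) < n"
  using degree_le[of "n - 1" "formal_deriv q"] coeff_formal_deriv_above degree_pos by force

definition defect :: "'a \<Rightarrow> 'a" where
  "defect b = of_nat n * lc * lc * delta b - lc * br b slc + slc * br b lc - lc * slc * eta b"

definition bracket_poly :: "'a \<Rightarrow> 'a poly" where
  "bracket_poly b = smult lc (map_poly (br b) q - formal_deriv q * [:delta b, eta b:])
     - smult (br b lc - of_nat n * lc * eta b) q"

lemma defect_zero: "defect 0 = 0"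
  by (simp add: defect_def delta_zero eta_zero)

lemma poly_bracket_poly:
  "poly (bracket_poly b) x = lc * br b (poly q x) - (br b lc - of_nat n * lc * eta b) * poly q x"
  by (simp add: bracket_poly_def br_poly algebra_simps)

lemma coeff_bracket_poly:
  "coeff (bracket_poly b) i = lc * (br b (coeff q i) - (coeff (formal_deriv q) i * delta b
     + (if i = 0 then 0 else coeff (formal_deriv q) (i - 1) * eta b)))
     - (br b lc - of_nat n * lc * eta b) * coeff q i"
  unfolding bracket_poly_def coeff_diff coeff_smult coeff_mult_linear
    coeff_map_poly[where f = "br b", OF br_zero_right] ..

lemma relation_bracket_poly:
  assumes b: "b \<in> B" "b \<in> eig mb" "mb \<in> X"
  shows "relation P (lwt + (mb + M)) (bracket_poly b)"
  unfolding relation_def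
proof (intro conjI)
  have eta_b: "eta b \<in> B" "eta b \<in> eig mb" using eta_mem_B eta_mem_eig b by auto
  have delta_b: "delta b \<in> B" "delta b \<in> eig (mb + m0)" using delta_mem_B delta_mem_eig b by auto
  have e: "br b lc - of_nat n * lc * eta b \<in> eig (mb + lwt)"
    using eig_br[OF b(2) lc_eig] eig_mult[OF eig_of_nat_mult[OF lc_eig] eta_b(2)]
    by (metis eig_diff add.commute)
  show "poly_over B (bracket_poly b)"
    unfolding bracket_poly_def
    by (intro poly_over_B_diff poly_over_B_smult poly_over_B_mult poly_over_B_linear
        poly_over_B_formal_deriv poly_over_B_map_poly[where f = "br b"] B_diff B_br B_mult B_of_nat
        lc_B q_B b(1) eta_b(1) delta_b(1)) simp_all
  have "M - m0 + mb + m0 = mb + M" by simp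
  with homogeneous_mult_linear[OF homogeneous_formal_deriv[OF q_homogeneous] delta_b(2) eta_b(2)]
  have "homogeneous (mb + M) (formal_deriv q * [:delta b, eta b:])" by metis
  with homogeneous_map_br[OF b(2) q_homogeneous]
  have "homogeneous (lwt + (mb + M)) (smult lc (map_poly (br b) q - formal_deriv q * [:delta b, eta b:]))"
    by (intro homogeneous_smult[OF lc_eig] homogeneous_diff)
  moreover have "mb + lwt + M = lwt + (mb + M)" by (simp add: algebra_simps)
  with homogeneous_smult[OF e q_homogeneous]
  have "homogeneous (lwt + (mb + M)) (smult (br b lc - of_nat n * lc * eta b) q)" by metis
  ultimately show "homogeneous (lwt + (mb + M)) (bracket_poly b)"
    unfolding bracket_poly_def by (rule homogeneous_diff)
  show "lwt + (mb + M) \<in> X" using char_lattice_add lwt_X b(3) M_X by blast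
  show "poly (bracket_poly b) x \<in> P"
    unfolding poly_bracket_poly using HPP_diff[OF P] HPP_mult[OF P] HPP_br[OF P] q_P by blast
qed

lemma degree_bracket_poly_less: "degree (bracket_poly b) < n"
proof -
  have "coeff (bracket_poly b) i = 0" if "n - 1 < i" for i
  proof (cases "i = n")
    case True
    thus ?thesis unfolding coeff_bracket_poly
      using coeff_formal_deriv_top coeff_formal_deriv_above[of n] degree_pos
      by (simp add: algebra_simps)
  next
    case False
    hence "n < i" using that by simp
    thus ?thesis unfolding coeff_bracket_poly
      using coeff_formal_deriv_above[of i] coeff_formal_deriv_above[of "i - 1"] coeff_eq_0[of q i]
      by simp
  qed
  hence "degree (bracket_poly b) \<le> n - 1" by (intro degree_le) blast
  thus ?thesis using degree_pos by linarith
qed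

lemma coeff_bracket_poly_subleading: "coeff (bracket_poly b) (n - 1) = - defect b"
proof -
  have "(if n - 1 = 0 then 0 else coeff (formal_deriv q) (n - 1 - 1) * eta b)
      = (of_nat n - 1) * slc * eta b"
  proof (cases "n - 1")
    case (Suc k)
    hence n: "n = Suc (Suc k)" using degree_pos by simp
    show ?thesis unfolding n by (simp add: coeff_formal_deriv)
  next
    case 0
    hence "n = 1" using degree_pos by simp
    thus ?thesis by simp
  qed
  hence "coeff (bracket_poly b) (n - 1) = lc * (br b slc - (of_nat n * lc * delta b
      + (of_nat n - 1) * slc * eta b)) - (br b lc - of_nat n * lc * eta b) * slc"
    by (simp only: coeff_bracket_poly coeff_formal_deriv_top)
  thus ?thesis unfolding defect_def by (simp add: algebra_simps)
qed

lemma defect_mem: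
  assumes "b \<in> B" "b \<in> eig mb" "mb \<in> X"
  shows "defect b \<in> P"
proof -
  have "coeff (bracket_poly b) (n - 1) \<in> P"
    by (rule lower_relation_coeff[OF relation_bracket_poly[OF assms] degree_bracket_poly_less])
  hence "- defect b \<in> P" unfolding coeff_bracket_poly_subleading .
  thus ?thesis using HPP_minus[OF P, of "- defect b"] by simp
qed

lemma poly_map_defect:
  "poly (map_poly defect q) x = of_nat n * lc * lc * poly (map_poly delta q) x
     + lc * poly (map_poly (br slc) q) x - slc * poly (map_poly (br lc) q) x
     - lc * slc * poly (map_poly eta q) x"
proof -
  have "map_poly defect q = smult (of_nat n * lc * lc) (map_poly delta q)
      + smult lc (map_poly (br slc) q) - smult slc (map_poly (br lc) q)
      - smult (lc * slc) (map_poly eta q)"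
  proof (rule poly_eqI)
    fix i
    show "coeff (map_poly defect q) i = coeff (smult (of_nat n * lc * lc) (map_poly delta q)
        + smult lc (map_poly (br slc) q) - smult slc (map_poly (br lc) q)
        - smult (lc * slc) (map_poly eta q)) i"
      using br_antisym[of "coeff q i" slc] br_antisym[of "coeff q i" lc]
      by (simp add: coeff_map_poly defect_zero delta_zero eta_zero defect_def algebra_simps)
  qed
  thus ?thesis by simp
qed

lemma poly_map_defect_mem: "poly (map_poly defect q) x \<in> P"
proof (rule HPP_poly[OF P], unfold poly_over_def, rule allI)
  fix i
  have "coeff q i \<in> B" "coeff q i \<in> eig (M - of_nat i * m0)"
    using q_B q_homogeneous unfolding poly_over_def homogeneous_def by blast+
  moreover have "M - of_nat i * m0 \<in> X"
    using char_lattice_diff char_lattice_of_nat_mult M_X m0 by blast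
  ultimately show "coeff (map_poly defect q) i \<in> P"
    using defect_mem by (simp add: coeff_map_poly defect_zero)
qed

text \<open>Combining the brackets of \<open>q(x) \<in> P\<close> with \<open>x\<close>, \<open>lc\<close> and \<open>slc\<close>, and subtracting the
  defects of \<open>lc\<close> and \<open>slc\<close>, leaves \<open>wt m0 \<cdot> lc\<^sup>2 (n lc x + slc)\<^sup>2 q'(x) \<in> P\<close>.\<close>

lemma linear_factor_deriv_mem:
  "lc * lc * (of_nat n * lc * x + slc) * (of_nat n * lc * x + slc) * poly (formal_deriv q) x \<in> P"
proof -
  define g where "g = poly q x"
  define Dg where "Dg = poly (formal_deriv q) x"
  define G where "G = of_nat n * lc * x + slc"
  define Y where "Y = poly (map_poly defect q) x"
  define Z where "Z = poly (map_poly eta q) x"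
  define K where "K = of_nat n * lc * lc * br x g + lc * br slc g - slc * br lc g"
  have K_P: "K \<in> P" unfolding K_def g_def
    by (intro HPP_diff[OF P] HPP_add[OF P] HPP_mult[OF P] HPP_br[OF P] q_P)
  have Y_P: "Y \<in> P" unfolding Y_def by (rule poly_map_defect_mem)
  have K_eq: "K = Y + lc * slc * Z + of_nat n * lc * lc * x * Z
      - lc * Dg * (delta slc + eta slc * x) + slc * Dg * (delta lc + eta lc * x)"
    unfolding K_def Y_def Z_def g_def Dg_def br_x_poly
    unfolding br_poly poly_map_defect by (simp add: algebra_simps)
  have Z_eq: "Z = scale (wt M) 1 * g - scale (wt m0) 1 * (x * Dg)"
    unfolding Z_def g_def Dg_def by (rule eta_poly[OF q_homogeneous M_X])
  have eta_slc: "eta slc = (scale (wt lwt) 1 + scale (wt m0) 1) * slc"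
    using eta_eigenvector[OF slc_eig lwt_m0_X] pairing_add scale_add_left scale_eq_mult by metis
  have eta_lc: "eta lc = scale (wt lwt) 1 * lc"
    using eta_eigenvector[OF lc_eig lwt_X] scale_eq_mult by metis
  have "of_nat n * lc * lc * K + scale (wt m0) 1 * (lc * lc * G * G * Dg)
      = of_nat n * lc * lc * Y + of_nat n * lc * lc * lc * scale (wt M) 1 * G * g
        - Dg * (lc * defect slc - slc * defect lc)"
    unfolding K_eq Z_eq G_def defect_def eta_slc eta_lc
    using br_antisym[of slc lc] by (simp add: br_self algebra_simps)
  moreover have "of_nat n * lc * lc * Y + of_nat n * lc * lc * lc * scale (wt M) 1 * G * g
      - Dg * (lc * defect slc - slc * defect lc) \<in> P"
    using defect_mem[OF slc_B slc_eig lwt_m0_X] defect_mem[OF lc_B lc_eig lwt_X] Y_P q_P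
    unfolding g_def
    by (intro HPP_diff[OF P] HPP_add[OF P] HPP_mult[OF P] HPP_mult_right[OF P])
  ultimately have "scale (wt m0) 1 * (lc * lc * G * G * Dg) \<in> P"
    using HPP_diff[OF P _ HPP_mult[OF P K_P, of "of_nat n * lc * lc"]] by (metis add_diff_cancel_left')
  thus ?thesis unfolding G_def Dg_def using HPP_scale_cancel[OF P _ eta0_m0] by blast
qed

lemma linear_factor_mem: "of_nat n * lc * x + slc \<in> P"
proof (rule ccontr)
  assume G: "of_nat n * lc * x + slc \<notin> P"
  have "poly (formal_deriv q) x \<in> P"
    using linear_factor_deriv_mem HPP_prime[OF P] lead_coeff_notin G by (metis mult.assoc)
  moreover have "M - m0 \<in> X" using char_lattice_diff M_X m0 by blast
  ultimately have "relation P (M - m0) (formal_deriv q)"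
    unfolding relation_def
    using poly_over_B_formal_deriv[OF q_B] homogeneous_formal_deriv[OF q_homogeneous] by blast
  from lower_relation_coeff[OF this degree_formal_deriv_less, of "n - 1"]
  have "of_nat n * lc \<in> P" unfolding coeff_formal_deriv_top .
  thus False using HPP_of_nat_mult_cancel[OF P] lead_coeff_notin degree_pos by blast
qed

lemma has_linear_relation: "has_linear_relation P"
  unfolding has_linear_relation_def
proof (intro exI conjI)
  show "of_nat n * lc \<in> B" by (intro B_mult B_of_nat lc_B)
  show "- slc \<in> B" by (rule B_minus[OF slc_B])
  show "of_nat n * lc \<in> eig lwt" by (rule eig_of_nat_mult[OF lc_eig])
  show "- slc \<in> eig (lwt + m0)" by (rule eig_minus[OF slc_eig])
  show "of_nat n * lc \<notin> P" using HPP_of_nat_mult_cancel[OF P] lead_coeff_notin degree_pos by blast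
  show "of_nat n * lc * x - - slc \<in> P" using linear_factor_mem by simp
qed (rule lwt_X)

end

context adjunction
begin

lemma has_linear_relation_if_relation:
  assumes P: "P \<in> HPP" and "relation P M q" "lead_coeff q \<notin> P"
  shows "has_linear_relation P"
proof -
  define R where "R k \<longleftrightarrow> (\<exists>q M. relation P M q \<and> degree q = k \<and> lead_coeff q \<notin> P)" for k
  have "R (degree q)" unfolding R_def using assms by blast
  then obtain q' M' where q': "relation P M' q'" "lead_coeff q' \<notin> P" "degree q' = (LEAST k. R k)"
    using LeastI[of R] unfolding R_def by blast
  have "lead_coeff q'' \<in> P" if "relation P M'' q''" "degree q'' < degree q'" for q'' M''
  proof -
    have "\<not> R (degree q'')" using that(2) q'(3) not_less_Least by metis
    thus ?thesis using that(1) unfolding R_def by blast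
  qed
  then interpret minimal_relation scale br r act B x m0 eta0 P q' M'
    using P q' by unfold_locales
  show ?thesis by (rule has_linear_relation)
qed

lemma subset_if_no_linear_relation:
  assumes P: "P \<in> HPP" and Q: "Q \<in> HPP" and PQ: "P \<inter> B \<subseteq> Q" and "\<not> has_linear_relation P"
  shows "P \<subseteq> Q"
proof
  fix a assume "a \<in> P"
  have "component m a \<in> Q" if "component m a \<noteq> 0" for m
  proof -
    have m: "m \<in> X" using component_nonzero_in_lattice[OF that] .
    obtain q where q: "poly_over B q" "homogeneous m q" "poly q x = component m a"
      using homogeneous_poly_over_B_exists[OF component_mem_eig m] by blast
    have "relation P m q" unfolding relation_def using q m HPP_component[OF P \<open>a \<in> P\<close>] by simp
    hence "coeff q i \<in> P" for i
      using relation_coeffs_mem[OF P, of "Suc (degree q)"] has_linear_relation_if_relation[OF P]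
        assms(4) by blast
    hence "poly_over Q q" using q(1) PQ unfolding poly_over_def by blast
    thus ?thesis using HPP_poly[OF Q] q(3) by metis
  qed
  hence "(\<Sum>m\<in>{m. component m a \<noteq> 0}. component m a) \<in> Q" by (intro HPP_sum[OF Q]) simp
  thus "a \<in> Q" using sum_components[of a] by simp
qed

lemma contraction_mem_H_poisson_primes:
  assumes P: "P \<in> HPP"
  shows "P \<inter> B \<in> H_poisson_primes r act br B"
proof -
  have "ideal_in B (P \<inter> B)" unfolding ideal_in_def
    using HPP_zero[OF P] B_zero HPP_add[OF P] B_add HPP_mult[OF P] B_mult by auto
  moreover have "P \<inter> B \<noteq> B" using HPP_one[OF P] B_one by blast
  moreover have "H_stable r act (P \<inter> B)"
    using HPP_act[OF P] H_stable unfolding H_stable_def by blast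
  ultimately show ?thesis
    unfolding H_poisson_primes_def poisson_prime_in_def prime_ideal_in_def
    using HPP_prime[OF P] HPP_br[OF P] B_br by blast
qed

lemma inj_on_contraction_and_linear_relation:
  "inj_on (\<lambda>P. (P \<inter> B, has_linear_relation P)) HPP"
proof (rule inj_onI)
  fix P Q assume P: "P \<in> HPP" and Q: "Q \<in> HPP"
    and eq: "(P \<inter> B, has_linear_relation P) = (Q \<inter> B, has_linear_relation Q)"
  hence "P \<inter> B = Q \<inter> B" "has_linear_relation P = has_linear_relation Q" by auto
  thus "P = Q"
    using subset_if_linear_relations[OF P Q] subset_if_linear_relations[OF Q P]
      subset_if_no_linear_relation[OF P Q] subset_if_no_linear_relation[OF Q P]
    by (metis inf.cobounded1 subset_antisym)
qed

end

theorem proposition1p9: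
  fixes scale :: "'k::field_char_0 \<Rightarrow> 'a::comm_ring_1 \<Rightarrow> 'a"
    and br :: "'a \<Rightarrow> 'a \<Rightarrow> 'a"
    and B :: "'a set" and x :: 'a
    and r :: nat and act :: "(nat \<Rightarrow> 'k) \<Rightarrow> 'a \<Rightarrow> 'a"
    and m0 :: "nat \<Rightarrow> int" and eta0 :: "nat \<Rightarrow> 'k"
  assumes "poisson_algebra scale br"
    and "poisson_subalgebra scale br B"
    and "generated_subalgebra scale (insert x B) = UNIV"
    and "rational_poisson_action scale br r act"
    and "H_stable r act B"
    and "x \<noteq> 0" and "m0 \<in> char_lattice r" and "x \<in> eigenspace scale r act m0"
    and "\<forall>b\<in>B. br x b - lie_act scale r act eta0 b * x \<in> B"
    and "pairing r eta0 m0 \<noteq> 0"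
  shows "\<exists>f. inj_on f (H_poisson_primes r act br UNIV)
           \<and> f ` H_poisson_primes r act br UNIV \<subseteq> H_poisson_primes r act br B \<times> (UNIV :: bool set)"
proof -
  interpret adjunction scale br r act B x m0 eta0
    using assms by unfold_locales simp_all
  show ?thesis
    using inj_on_contraction_and_linear_relation contraction_mem_H_poisson_primes by blast
qed

end
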